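(* In the setting below, for every integer $t$ with $1 \leq t < \tau$ and every $i \in D_t^-$, if $\eta \geq \eta_0$ then $$a_{t+1}^i - a_t^i \geq \max\left(\frac{\eta\|x_i\|^2}{2n(\exp(a_t^i)+1)}, \ \frac{1}{2}\eta\gamma^2 G(w_t)\right).$$
   Context: Dimension $d=2$. Data $x_1,\dots,x_n\in\mathbb{R}^2$ with $\|x_i\|\le 1$, linearly separable (some $w$ has $\langle w,x_i\rangle>0$ for all $i$). $F(w) = \frac{1}{n}\sum_{i=1}^n \log(1+\exp(-\langle w, x_i\rangle))$ and $G(w) = \frac{1}{n}\sum_{i=1}^n \frac{1}{\exp(\langle w, x_i\rangle)+1}$. Maximum margin $\gamma = \max_{\|w\|=1}\min_i \langle w, x_i\rangle$ with maximizer the unit vector $w_*$; $v_*$ is a fixed unit vector orthogonal to $w_*$. Gradient descent: $w_0=0$, $w_{t+1} = w_t - \eta\nabla F(w_t)$ with constant $\eta>0$. $\tilde{w}_t = \langle w_t, v_*\rangle$, $\tilde{x}_i = \langle x_i, v_*\rangle$, $a_t^i = \langle w_t, x_i\rangle$, $D_t^- = \{i\in[n] : \tilde{x}_i\tilde{w}_t < 0\}$. $\tau = \min\{t\ge 0: F(w_t)\le 1/(8\eta)\}$. $\eta_0 = \max(n, \frac{32}{\gamma^2}\log\frac{256}{\gamma^2})$. *)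

theory Defs
  imports "HOL-Analysis.Analysis"
begin

text \<open>Data: n points x 0, ..., x (n-1) in R^2 (indices shifted by one w.r.t. the paper).\<close>

definition logloss :: "nat \<Rightarrow> (nat \<Rightarrow> real^2) \<Rightarrow> real^2 \<Rightarrow> real" where
  "logloss n x w = (1 / real n) * (\<Sum>i<n. ln (1 + exp (- (w \<bullet> x i))))"

definition Gfun :: "nat \<Rightarrow> (nat \<Rightarrow> real^2) \<Rightarrow> real^2 \<Rightarrow> real" where
  "Gfun n x w = (1 / real n) * (\<Sum>i<n. 1 / (exp (w \<bullet> x i) + 1))"

definition margin :: "nat \<Rightarrow> (nat \<Rightarrow> real^2) \<Rightarrow> real" where
  "margin n x = (SUP w\<in>{w. norm w = 1}. Min ((\<lambda>i. w \<bullet> x i) ` {..<n}))"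

definition grad :: "(real^2 \<Rightarrow> real) \<Rightarrow> real^2 \<Rightarrow> real^2" where
  "grad f w = (THE g. (f has_derivative (\<lambda>h. g \<bullet> h)) (at w))"

fun gd :: "nat \<Rightarrow> (nat \<Rightarrow> real^2) \<Rightarrow> real \<Rightarrow> nat \<Rightarrow> real^2" where
  "gd n x eta 0 = 0"
| "gd n x eta (Suc t) = gd n x eta t - eta *\<^sub>R grad (logloss n x) (gd n x eta t)"

definition tau :: "nat \<Rightarrow> (nat \<Rightarrow> real^2) \<Rightarrow> real \<Rightarrow> nat" where
  "tau n x eta = (LEAST t. logloss n x (gd n x eta t) \<le> 1 / (8 * eta))"

definition eta0 :: "nat \<Rightarrow> real \<Rightarrow> real" where
  "eta0 n gamma = max (real n) (32 / gamma^2 * ln (256 / gamma^2))"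

end

theory Submission
  imports Defs
begin

(* The increment a_(t+1)^i - a_t^i equals (eta/n) sum_j <x_j, x_i> g_j with g_j = 1/(exp a_t^j + 1).
   Split the points by the sign of <x_j, v*> <w_t, v*>. On the opposite side of w_t (which
   contains i) the v*-components of x_j and x_i have equal signs and the w*-components are at
   least gamma, so <x_j, x_i> >= gamma^2. On the same side, a_t^j >= eta gamma^2 / 2 because w_t
   has grown to at least eta gamma / 2 along w*; the choice of eta0 makes these weights
   negligible against the weight > 1/(16 eta) of a point witnessing F(w_t) > 1/(8 eta), so their
   contribution, at least -g_j each, is absorbed by the opposite side. *)

lemma grad_eqI:
  assumes "(f has_derivative (\<lambda>h. g \<bullet> h)) (at w)"
  shows "grad f w = g"
  unfolding grad_def
proof (rule the_equality)
  fix g' assume "(f has_derivative (\<lambda>h. g' \<bullet> h)) (at w)"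
  then have "(\<lambda>h. g' \<bullet> h) = (\<lambda>h. g \<bullet> h)" using assms by (rule has_derivative_unique)
  then show "g' = g" by (metis vector_eq_rdot)
qed (rule assms)

lemma has_derivative_logistic_loss:
  "((\<lambda>w. ln (1 + exp (- (w \<bullet> y)))) has_derivative
     (\<lambda>h. (- (1 / (exp (w \<bullet> y) + 1)) *\<^sub>R y) \<bullet> h)) (at w)"
proof -
  have "((\<lambda>w. ln (1 + exp (- (w \<bullet> y)))) has_derivative
      (\<lambda>h. (1 / (1 + exp (- (w \<bullet> y)))) * (exp (- (w \<bullet> y)) * - (h \<bullet> y)))) (at w)"
    by (auto intro!: derivative_eq_intros ext simp: add_pos_pos field_simps)
  moreover have "(1 / (1 + exp (- (w \<bullet> y)))) * (exp (- (w \<bullet> y)) * - (h \<bullet> y))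
      = (- (1 / (exp (w \<bullet> y) + 1)) *\<^sub>R y) \<bullet> h" for h
    by (simp add: exp_minus field_simps inner_commute)
  ultimately show ?thesis by simp
qed

lemma grad_logloss:
  "grad (logloss n x) w = - ((1 / real n) *\<^sub>R (\<Sum>j<n. (1 / (exp (w \<bullet> x j) + 1)) *\<^sub>R x j))"
proof (rule grad_eqI)
  have "((\<lambda>w. (1 / real n) * (\<Sum>j<n. ln (1 + exp (- (w \<bullet> x j))))) has_derivative
      (\<lambda>h. (1 / real n) * (\<Sum>j<n. (- (1 / (exp (w \<bullet> x j) + 1)) *\<^sub>R x j) \<bullet> h))) (at w)"
    by (intro has_derivative_mult_right has_derivative_sum has_derivative_logistic_loss)
  then show "(logloss n x has_derivative
      (\<lambda>h. - ((1 / real n) *\<^sub>R (\<Sum>j<n. (1 / (exp (w \<bullet> x j) + 1)) *\<^sub>R x j)) \<bullet> h)) (at w)"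
    unfolding logloss_def by (simp add: inner_sum_left sum_distrib_left sum_negf)
qed

lemma gd_Suc_inner:
  "gd n x eta (Suc t) \<bullet> y =
     gd n x eta t \<bullet> y + eta / real n * (\<Sum>j<n. (x j \<bullet> y) / (exp (gd n x eta t \<bullet> x j) + 1))"
  by (simp add: grad_logloss inner_diff_left inner_sum_left sum_distrib_left algebra_simps)

lemma inner_eq_orthonormal_coords:
  fixes u v y z :: "real^2"
  assumes "norm u = 1" "norm v = 1" "u \<bullet> v = 0"
  shows "y \<bullet> z = (y \<bullet> u) * (z \<bullet> u) + (y \<bullet> v) * (z \<bullet> v)"
proof -
  have "u \<bullet> u = 1" "v \<bullet> v = 1" using assms by (simp_all add: dot_square_norm)
  then have "u$1 * u$1 + u$2 * u$2 = 1" "v$1 * v$1 + v$2 * v$2 = 1" "u$1 * v$1 + u$2 * v$2 = 0"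
    using assms(3) by (simp_all add: inner_vec_def sum_2)
  then show ?thesis by (simp add: inner_vec_def sum_2) algebra
qed

lemma min_one_logistic_loss_le:
  "min 1 (ln (1 + exp (- a))) \<le> 2 / (exp a + 1 :: real)"
proof -
  define u where "u = exp (- a)"
  have u: "u > 0" and weight: "2 / (exp a + 1) = 2 * u / (1 + u)"
    by (simp_all add: u_def exp_minus field_simps)
  show ?thesis
  proof (cases "u \<le> 1")
    case True
    have "ln (1 + u) \<le> u" using u by (simp add: ln_add_one_self_le_self)
    also have "u \<le> 2 * u / (1 + u)" using True u by (simp add: field_simps)
    finally show ?thesis by (simp add: weight u_def)
  next
    case False
    then have "1 \<le> 2 * u / (1 + u)" by (simp add: field_simps)
    then show ?thesis by (simp add: weight)
  qed
qed

lemma exp_half_ge_of_log_threshold: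
  fixes C eta :: real
  assumes C: "0 < C" "C \<le> 1" and eta: "32 / C * ln (256 / C) \<le> eta"
  shows "48 * eta^2 / C \<le> exp (eta * C / 2)"
proof -
  define L where "L = ln (256 / C)"
  define s where "s = eta * C / 2"
  have "L > 0" using C by (simp add: L_def)
  have "16 * L \<le> s" using eta C by (simp add: L_def s_def field_simps)
  have "(256 / C)^3 = exp (3 * L)" using exp_of_nat_mult[of 3 L] C by (simp add: L_def)
  also have "\<dots> \<le> exp (s / 2)" using \<open>16 * L \<le> s\<close> \<open>L > 0\<close> by simp
  finally have "(256 / C)^3 \<le> exp (s / 2)" .
  moreover have "s / 4 \<le> exp (s / 4)" using exp_ge_add_one_self[of "s / 4"] by linarith
  moreover have "0 \<le> s" using \<open>16 * L \<le> s\<close> \<open>L > 0\<close> by simp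
  ultimately have "(256 / C)^3 * ((s / 4) * (s / 4)) \<le> exp (s / 2) * (exp (s / 4) * exp (s / 4))"
    by (intro mult_mono) auto
  also have "\<dots> = exp s" by (simp flip: exp_add)
  finally have "(256 / C)^3 * (s / 4)^2 \<le> exp s" by (simp add: power2_eq_square)
  moreover have "48 * eta^2 / C \<le> (256 / C)^3 * (s / 4)^2"
    using C by (simp add: s_def field_simps power2_eq_square power3_eq_cube)
  ultimately show ?thesis by (simp add: s_def)
qed

lemma weighted_sum_lower_bounds:
  fixes k g :: "'a \<Rightarrow> real"
  assumes A: "finite A" "D \<subseteq> A" and i: "i \<in> A - D" and c: "0 \<le> c"
    and g_nonneg: "\<forall>j\<in>A. 0 \<le> g j"
    and k_ge_c: "\<forall>j\<in>A - D. c \<le> k j" and k_ge_neg1: "\<forall>j\<in>D. -1 \<le> k j"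
    and mass: "(1 + c / 2) * sum g D \<le> c / 2 * sum g (A - D)"
  shows "c / 2 * sum g A \<le> (\<Sum>j\<in>A. k j * g j)"
    and "k i * g i / 2 \<le> (\<Sum>j\<in>A. k j * g j)"
proof -
  have split: "sum f A = sum f (A - D) + sum f D" for f :: "'a \<Rightarrow> real"
    using A by (intro sum.subset_diff)
  have split_i: "sum f (A - D) = f i + sum f (A - D - {i})" for f :: "'a \<Rightarrow> real"
    using A i by (meson finite_Diff sum.remove)
  have "0 \<le> sum g D" using A g_nonneg by (intro sum_nonneg) auto
  have "g i \<le> sum g (A - D)"
    using A i g_nonneg by (intro member_le_sum) auto
  have D_part: "- sum g D \<le> (\<Sum>j\<in>D. k j * g j)"
    unfolding sum_negf[symmetric]
  proof (rule sum_mono)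
    fix j assume "j \<in> D"
    then show "- g j \<le> k j * g j"
      using A k_ge_neg1 g_nonneg mult_right_mono[of "-1" "k j" "g j"] by auto
  qed
  have N_part: "c * sum g B \<le> (\<Sum>j\<in>B. k j * g j)" if "B \<subseteq> A - D" for B
    unfolding sum_distrib_left using that g_nonneg k_ge_c
    by (intro sum_mono) (auto intro: mult_right_mono)
  have "sum g D \<le> c / 2 * sum g (A - D)"
    using mass \<open>0 \<le> sum g D\<close> c mult_right_mono[of 1 "1 + c / 2" "sum g D"] by simp
  have "c / 2 * sum g A = c / 2 * sum g (A - D) + c / 2 * sum g D"
    using split[of g] by (simp add: distrib_left)
  then show "c / 2 * sum g A \<le> (\<Sum>j\<in>A. k j * g j)"
    using mass D_part N_part[of "A - D"] split[of "\<lambda>j. k j * g j"]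
    by (simp add: algebra_simps)
  have "c * g i \<le> k i * g i" using k_ge_c i g_nonneg by (simp add: mult_right_mono)
  moreover have "c * g i \<le> c * sum g (A - D)"
    using \<open>g i \<le> sum g (A - D)\<close> c by (rule mult_left_mono)
  moreover have "c * sum g (A - D - {i}) = c * sum g (A - D) - c * g i"
    using split_i[of g] by (simp add: algebra_simps)
  ultimately show "k i * g i / 2 \<le> (\<Sum>j\<in>A. k j * g j)"
    using \<open>sum g D \<le> c / 2 * sum g (A - D)\<close> D_part N_part[of "A - D - {i}", OF Diff_subset]
      split[of "\<lambda>j. k j * g j"] split_i[of "\<lambda>j. k j * g j"]
    by linarith
qed

lemma margin_pos:
  assumes n: "1 \<le> n" and separable: "\<exists>w. \<forall>j<n. 0 < w \<bullet> x j"
  shows "0 < margin n x"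
proof -
  define m where "m w = Min ((\<lambda>j. w \<bullet> x j) ` {..<n})" for w :: "real^2"
  obtain u where u: "\<forall>j<n. 0 < u \<bullet> x j" using separable by blast
  with n have "u \<noteq> 0" by force
  have "0 < m (u /\<^sub>R norm u)"
    unfolding m_def using n u \<open>u \<noteq> 0\<close> by (subst Min_gr_iff) (auto simp: lessThan_empty_iff)
  also have "m (u /\<^sub>R norm u) \<le> margin n x"
    unfolding margin_def m_def[symmetric]
  proof (rule cSUP_upper)
    show "bdd_above (m ` {w. norm w = 1})"
    proof (rule bdd_aboveI2)
      fix v :: "real^2" assume "v \<in> {w. norm w = 1}"
      have "m v \<le> v \<bullet> x 0" unfolding m_def using n by (intro Min_le) auto
      also have "\<dots> \<le> norm (x 0)"
        using norm_cauchy_schwarz[of v "x 0"] \<open>v \<in> {w. norm w = 1}\<close> by simp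
      finally show "m v \<le> norm (x 0)" .
    qed
  qed (use \<open>u \<noteq> 0\<close> in simp)
  finally show ?thesis .
qed

locale logistic_gd =
  fixes n :: nat and x :: "nat \<Rightarrow> real^2" and eta :: real and wstar vstar :: "real^2"
  assumes n_pos: "n \<ge> 1"
    and x_bdd: "\<forall>j<n. norm (x j) \<le> 1"
    and separable: "\<exists>w. \<forall>j<n. w \<bullet> x j > 0"
    and wstar_unit: "norm wstar = 1"
    and wstar_max: "Min ((\<lambda>j. wstar \<bullet> x j) ` {..<n}) = margin n x"
    and vstar_unit: "norm vstar = 1"
    and vstar_orth: "vstar \<bullet> wstar = 0"
    and eta_ge: "eta \<ge> eta0 n (margin n x)"
begin

abbreviation \<gamma> where "\<gamma> \<equiv> margin n x"

lemma gamma_pos: "0 < \<gamma>"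
  using n_pos separable by (rule margin_pos)

lemma gamma_le_inner: "j < n \<Longrightarrow> \<gamma> \<le> x j \<bullet> wstar"
  unfolding wstar_max[symmetric] by (subst inner_commute) (intro Min_le; simp)

lemma gamma_le_1: "\<gamma> \<le> 1"
proof -
  have "\<gamma> \<le> x 0 \<bullet> wstar" using n_pos by (intro gamma_le_inner) simp
  also have "\<dots> \<le> norm (x 0) * norm wstar" by (rule norm_cauchy_schwarz)
  also have "\<dots> \<le> 1" using x_bdd n_pos wstar_unit by simp
  finally show ?thesis .
qed

lemma eta_ge_n: "real n \<le> eta"
  using eta_ge by (simp add: eta0_def)

lemma eta_ge_1: "1 \<le> eta"
  using eta_ge_n n_pos by linarith

lemma inner_eq_coords: "y \<bullet> z = (y \<bullet> wstar) * (z \<bullet> wstar) + (y \<bullet> vstar) * (z \<bullet> vstar)"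
  using wstar_unit vstar_unit vstar_orth by (intro inner_eq_orthonormal_coords) (simp_all add: inner_commute)

lemma eta_mult_exp_le: "eta * exp (- (eta * \<gamma>^2 / 2)) \<le> \<gamma>^2 / (48 * eta)"
proof -
  have "48 * eta^2 / \<gamma>^2 \<le> exp (eta * \<gamma>^2 / 2)"
    using gamma_pos gamma_le_1 eta_ge
    by (intro exp_half_ge_of_log_threshold) (auto simp: eta0_def power_le_one)
  then show ?thesis
    using gamma_pos eta_ge_1 by (simp add: exp_minus field_simps power2_eq_square)
qed

lemma gd_inner_wstar_mono: "gd n x eta t \<bullet> wstar \<le> gd n x eta (Suc t) \<bullet> wstar"
proof -
  have "0 \<le> x j \<bullet> wstar" if "j < n" for j
    using gamma_le_inner[OF that] gamma_pos by linarith
  then have "0 \<le> (\<Sum>j<n. (x j \<bullet> wstar) / (exp (gd n x eta t \<bullet> x j) + 1))"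
    by (intro sum_nonneg divide_nonneg_pos) (auto simp: add_pos_pos)
  then show ?thesis unfolding gd_Suc_inner using eta_ge_1 by simp
qed

lemma gd_inner_wstar_ge:
  assumes "1 \<le> t" shows "eta * \<gamma> / 2 \<le> gd n x eta t \<bullet> wstar"
  using assms
proof (induction t rule: dec_induct)
  case base
  have "(\<Sum>j<n. \<gamma> / 2) \<le> (\<Sum>j<n. (x j \<bullet> wstar) / 2)"
    by (intro sum_mono) (simp add: gamma_le_inner)
  then have "real n * (\<gamma> / 2) \<le> (\<Sum>j<n. (x j \<bullet> wstar) / 2)"
    by simp
  then have "eta / real n * (real n * (\<gamma> / 2)) \<le> eta / real n * (\<Sum>j<n. (x j \<bullet> wstar) / 2)"
    using eta_ge_1 by (intro mult_left_mono) auto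
  then show ?case using n_pos gd_Suc_inner[of n x eta 0 wstar] by simp
next
  case (step t)
  then show ?case using gd_inner_wstar_mono[of t] by linarith
qed

lemma inner_ge_if_same_side:
  assumes "1 \<le> t" "j < n" "0 < (x j \<bullet> vstar) * (gd n x eta t \<bullet> vstar)"
  shows "eta * \<gamma>^2 / 2 \<le> gd n x eta t \<bullet> x j"
proof -
  have "eta * \<gamma>^2 / 2 = (eta * \<gamma> / 2) * \<gamma>" by (simp add: power2_eq_square)
  also have "\<dots> \<le> (gd n x eta t \<bullet> wstar) * (x j \<bullet> wstar)"
    using gd_inner_wstar_ge[OF assms(1)] gamma_le_inner[OF assms(2)] gamma_pos eta_ge_1
    by (intro mult_mono') auto
  also have "\<dots> \<le> gd n x eta t \<bullet> x j"
    using inner_eq_coords[of "gd n x eta t" "x j"] assms(3) by (simp add: mult.commute)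
  finally show ?thesis .
qed

lemma inner_ge_if_opposite_side:
  assumes "i < n" "j < n" "(x i \<bullet> vstar) * (w \<bullet> vstar) < 0"
    and "\<not> 0 < (x j \<bullet> vstar) * (w \<bullet> vstar)"
  shows "\<gamma>^2 \<le> x j \<bullet> x i"
proof -
  have "0 \<le> ((x j \<bullet> vstar) * (w \<bullet> vstar)) * ((x i \<bullet> vstar) * (w \<bullet> vstar))"
    using assms(3,4) by (intro mult_nonpos_nonpos) auto
  also have "\<dots> = ((x j \<bullet> vstar) * (x i \<bullet> vstar)) * (w \<bullet> vstar)^2"
    by (simp add: power2_eq_square)
  finally have "0 \<le> (x j \<bullet> vstar) * (x i \<bullet> vstar)"
    using assms(3) by (auto simp: zero_le_mult_iff)
  moreover have "\<gamma> * \<gamma> \<le> (x j \<bullet> wstar) * (x i \<bullet> wstar)"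
    using gamma_le_inner assms(1,2) gamma_pos by (intro mult_mono') auto
  ultimately show ?thesis
    using inner_eq_coords[of "x j" "x i"] by (simp add: power2_eq_square)
qed

lemma exists_heavy_point:
  assumes "t < tau n x eta"
  shows "\<exists>j<n. 1 / (16 * eta) < 1 / (exp (gd n x eta t \<bullet> x j) + 1)"
proof -
  have "1 / (8 * eta) < logloss n x (gd n x eta t)"
    using not_less_Least[OF assms[unfolded tau_def]] by simp
  moreover have "logloss n x (gd n x eta t) \<le> 1 / (8 * eta)"
    if "\<forall>j<n. ln (1 + exp (- (gd n x eta t \<bullet> x j))) \<le> 1 / (8 * eta)"
  proof -
    have "(\<Sum>j<n. ln (1 + exp (- (gd n x eta t \<bullet> x j)))) \<le> (\<Sum>j<n. 1 / (8 * eta))"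
      using that by (intro sum_mono) simp
    then show ?thesis using n_pos by (simp add: logloss_def field_simps)
  qed
  ultimately obtain j where j: "j < n" "1 / (8 * eta) < ln (1 + exp (- (gd n x eta t \<bullet> x j)))"
    by (meson not_less)
  moreover have "1 / (8 * eta) < 1" using eta_ge_1 by simp
  ultimately show ?thesis
    using min_one_logistic_loss_le[of "gd n x eta t \<bullet> x j"] by auto
qed

lemma inner_ge_neg_1: "i < n \<Longrightarrow> j < n \<Longrightarrow> -1 \<le> x j \<bullet> x i"
  using Cauchy_Schwarz_ineq2[of "x j" "x i"] x_bdd mult_mono[of "norm (x j)" 1 "norm (x i)" 1]
  by auto

(* The counterpart D_t^+ of D_t^-; indices with <x_j, v*> = 0 lie in neither set. *)
definition same_side :: "nat \<Rightarrow> nat set" where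
  "same_side t = {j\<in>{..<n}. 0 < (x j \<bullet> vstar) * (gd n x eta t \<bullet> vstar)}"

lemma same_side_mass_le:
  assumes "1 \<le> t" "t < tau n x eta"
  defines "g j \<equiv> 1 / (exp (gd n x eta t \<bullet> x j) + 1)"
  shows "(1 + \<gamma>^2 / 2) * sum g (same_side t) \<le> \<gamma>^2 / 2 * sum g ({..<n} - same_side t)"
proof -
  define e where "e = exp (- (eta * \<gamma>^2 / 2))"
  have g_le: "g j \<le> e" if "j \<in> same_side t" for j
  proof -
    have "g j \<le> exp (- (gd n x eta t \<bullet> x j))"
      unfolding g_def exp_minus by (simp add: divide_inverse le_imp_inverse_le)
    also have "\<dots> \<le> e"
      using inner_ge_if_same_side[OF assms(1)] that by (simp add: e_def same_side_def)
    finally show ?thesis .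
  qed
  have "sum g (same_side t) \<le> real n * e"
  proof -
    have "sum g (same_side t) \<le> real (card (same_side t)) * e"
      using g_le by (rule sum_bounded_above)
    also have "card (same_side t) \<le> n"
      using card_mono[of "{..<n}" "same_side t"] by (auto simp: same_side_def)
    then have "real (card (same_side t)) * e \<le> real n * e"
      by (simp add: e_def)
    finally show ?thesis .
  qed
  also have "\<dots> \<le> eta * e"
    using eta_ge_n by (intro mult_right_mono) (simp_all add: e_def)
  also have "\<dots> \<le> \<gamma>^2 / (48 * eta)"
    using eta_mult_exp_le by (simp add: e_def)
  finally have mass: "sum g (same_side t) \<le> \<gamma>^2 / (48 * eta)" .
  obtain jm where jm: "jm < n" "1 / (16 * eta) < g jm"
    using exists_heavy_point[OF assms(2)] by (auto simp: g_def)
  have "\<gamma>^2 \<le> 1" using gamma_pos gamma_le_1 by (simp add: power_le_one)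
  have "e \<le> \<gamma>^2 / (48 * eta^2)"
    using eta_mult_exp_le eta_ge_1 by (simp add: e_def field_simps power2_eq_square)
  also have "\<dots> < 1 / (16 * eta)"
    using \<open>\<gamma>^2 \<le> 1\<close> eta_ge_1 by (simp add: field_simps power2_eq_square)
  finally have "jm \<in> {..<n} - same_side t" using g_le jm by fastforce
  then have "1 / (16 * eta) \<le> sum g ({..<n} - same_side t)"
    using jm by (intro order.trans[OF _ member_le_sum]) (auto simp: g_def add_pos_pos less_imp_le)
  then have "\<gamma>^2 / 2 * (1 / (16 * eta)) \<le> \<gamma>^2 / 2 * sum g ({..<n} - same_side t)"
    by (intro mult_left_mono) auto
  moreover have "(1 + \<gamma>^2 / 2) * sum g (same_side t) \<le> (3 / 2) * (\<gamma>^2 / (48 * eta))"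
    using mass \<open>\<gamma>^2 \<le> 1\<close> by (intro mult_mono) (auto simp: g_def sum_nonneg add_pos_pos less_imp_le)
  ultimately show ?thesis by simp
qed

end

theorem lemma5:
  fixes n :: nat and x :: "nat \<Rightarrow> real^2" and eta :: real
    and wstar vstar :: "real^2" and t i :: nat
  assumes n_pos: "n \<ge> 1"
    and x_bdd: "\<forall>j<n. norm (x j) \<le> 1"
    and separable: "\<exists>w. \<forall>j<n. w \<bullet> x j > 0"
    and wstar_unit: "norm wstar = 1"
    and wstar_max: "Min ((\<lambda>j. wstar \<bullet> x j) ` {..<n}) = margin n x"
    and vstar_unit: "norm vstar = 1"
    and vstar_orth: "vstar \<bullet> wstar = 0"
    and eta_pos: "eta > 0"
    and eta_ge: "eta \<ge> eta0 n (margin n x)"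
    and t_ge: "1 \<le> t" and t_lt: "t < tau n x eta"
    and i_lt: "i < n"
    and i_neg: "(x i \<bullet> vstar) * (gd n x eta t \<bullet> vstar) < 0"
  shows "gd n x eta (Suc t) \<bullet> x i - gd n x eta t \<bullet> x i \<ge>
           max (eta * (norm (x i))^2 / (2 * real n * (exp (gd n x eta t \<bullet> x i) + 1)))
               ((1/2) * eta * (margin n x)^2 * Gfun n x (gd n x eta t))"
proof -
  interpret logistic_gd n x eta wstar vstar
    using n_pos x_bdd separable wstar_unit wstar_max vstar_unit vstar_orth eta_ge by unfold_locales
  define g where "g j = 1 / (exp (gd n x eta t \<bullet> x j) + 1)" for j
  define k where "k j = x j \<bullet> x i" for j
  have scale: "0 \<le> eta / real n" using eta_pos by simp
  have "i \<in> {..<n} - same_side t" using i_lt i_neg by (auto simp: same_side_def)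
  then have bound_i: "k i * g i / 2 \<le> (\<Sum>j<n. k j * g j)"
    and bound_G: "\<gamma>^2 / 2 * sum g {..<n} \<le> (\<Sum>j<n. k j * g j)"
    using same_side_mass_le[OF t_ge t_lt] inner_ge_neg_1 i_lt
      inner_ge_if_opposite_side[OF i_lt _ i_neg]
    by (intro weighted_sum_lower_bounds; auto simp: same_side_def g_def k_def add_pos_pos less_imp_le)+
  have "gd n x eta (Suc t) \<bullet> x i - gd n x eta t \<bullet> x i = eta / real n * (\<Sum>j<n. k j * g j)"
    unfolding gd_Suc_inner by (simp add: k_def g_def)
  moreover have "eta * (norm (x i))^2 / (2 * real n * (exp (gd n x eta t \<bullet> x i) + 1))
      = eta / real n * (k i * g i / 2)"
    by (simp add: k_def g_def power2_norm_eq_inner)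
  moreover have "(1/2) * eta * \<gamma>^2 * Gfun n x (gd n x eta t) = eta / real n * (\<gamma>^2 / 2 * sum g {..<n})"
    by (simp add: Gfun_def g_def)
  ultimately show ?thesis
    using mult_left_mono[OF bound_i scale] mult_left_mono[OF bound_G scale] by simp
qed

end
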